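(* Every triangulated polygon $T$ with no interior vertices has a (possibly disconnected) scaffold.
   Context: A triangulated polygon with no interior vertices is a finite $2$-dimensional simplicial complex homeomorphic to a closed disk all of whose vertices lie on the boundary; its triangles are called facets. The (vertex-facet) incidence graph of $T$ is the bipartite graph whose nodes are the facets and vertices of $T$, with an arc $(v,f)$ whenever $v$ is a vertex of $f$. A scaffold is a subgraph of the incidence graph containing every facet node, in which every facet node has degree exactly $2$ and at most two vertex nodes have odd degree. (The empty triangulation has the empty scaffold.) *)

theory Defs
  imports "HOL-Analysis.Analysis"
begin

text \<open>A finite pure 2-dimensional simplicial complex is given by its set of facets
  (triangles), each a 3-element set of vertices. Its vertices are the union of the facets.\<close>

definition complex_vertices :: "'v set set \<Rightarrow> 'v set" where
  "complex_vertices F = \<Union>F"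

text \<open>Standard geometric realization in the function space 'v \<Rightarrow> real (product topology):
  convex combinations of the vertices of a single facet (barycentric coordinates).\<close>

definition realization :: "'v set set \<Rightarrow> ('v \<Rightarrow> real) set" where
  "realization F = {x. \<exists>f\<in>F. (\<forall>v. 0 \<le> x v) \<and> (\<forall>v. v \<notin> f \<longrightarrow> x v = 0) \<and> sum x f = 1}"

definition vertex_point :: "'v \<Rightarrow> ('v \<Rightarrow> real)" where
  "vertex_point v = (\<lambda>w. if w = v then 1 else 0)"

definition triangulated_polygon_no_interior :: "'v set set \<Rightarrow> bool" where
  "triangulated_polygon_no_interior F \<longleftrightarrow>
     finite F \<and> (\<forall>f\<in>F. card f = 3) \<and>
     (\<exists>h k. homeomorphism (realization F) (cball (0::complex) 1) h k \<and>
            (\<forall>v\<in>complex_vertices F. h (vertex_point v) \<in> sphere 0 1))"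

definition incidence_arcs :: "'v set set \<Rightarrow> ('v \<times> 'v set) set" where
  "incidence_arcs F = {(v, f). f \<in> F \<and> v \<in> f}"

definition vdeg :: "('v \<times> 'v set) set \<Rightarrow> 'v \<Rightarrow> nat" where
  "vdeg S v = card {f. (v, f) \<in> S}"

definition fdeg :: "('v \<times> 'v set) set \<Rightarrow> 'v set \<Rightarrow> nat" where
  "fdeg S f = card {v. (v, f) \<in> S}"

definition scaffold :: "'v set set \<Rightarrow> ('v \<times> 'v set) set \<Rightarrow> bool" where
  "scaffold F S \<longleftrightarrow> S \<subseteq> incidence_arcs F \<and> (\<forall>f\<in>F. fdeg S f = 2) \<and>
     card {v \<in> complex_vertices F. odd (vdeg S v)} \<le> 2"

end

theory Submission
  imports Defs
begin

(* A disk with finitely many points removed is connected, so the facets are connected through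
   shared edges: otherwise the facets on either side of a cut would give two disjoint closed
   pieces covering the punctured realization. Adding the facets one at a time along shared edges, one keeps the invariant that
   for any two distinct vertices u, w the degree parities at all other vertices can be prescribed
   arbitrarily: a new facet is joined to two of its vertices, which flips their parities, and
   at most one of its vertices is new. Prescribing even parities everywhere gives a scaffold. *)

lemma connected_homeomorphic_convex_diff_countable:
  fixes T :: "'a::euclidean_space set"
  assumes hom: "homeomorphism S T h k" and "convex T" "\<not> collinear T" "countable X"
  shows "connected (S - X)"
proof -
  have "inj_on h S"
    using homeomorphism_apply1[OF hom] by (rule inj_on_inverseI)
  then have image: "h ` (S - X) = T - h ` (S \<inter> X)"
    using homeomorphism_image1[OF hom] by (auto simp: inj_on_def)
  have "connected (T - h ` (S \<inter> X))"
    using assms by (intro connected_convex_diff_countable) auto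
  moreover have "(S - X) homeomorphic (T - h ` (S \<inter> X))"
    unfolding homeomorphic_def using homeomorphism_of_subsets[OF hom _ _ image] by blast
  ultimately show ?thesis
    using homeomorphic_connectedness by blast
qed

definition facet_simplex :: "'v set \<Rightarrow> ('v \<Rightarrow> real) set" where
  "facet_simplex f = {x. (\<forall>v. 0 \<le> x v) \<and> (\<forall>v. v \<notin> f \<longrightarrow> x v = 0) \<and> sum x f = 1}"

lemma realization_eq_UN_facet_simplex: "realization F = (\<Union>f\<in>F. facet_simplex f)"
  by (auto simp: realization_def facet_simplex_def)

lemma closed_facet_simplex:
  fixes f :: "'v set"
  assumes "finite f"
  shows "closed (facet_simplex f)"
proof -
  have coord: "continuous_on UNIV (\<lambda>x::'v\<Rightarrow>real. x v)" for v
    by simp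
  have "closed {x::'v\<Rightarrow>real. \<forall>v. 0 \<le> x v}"
    using closed_Collect_le[OF continuous_on_const coord] by (auto intro!: closed_Collect_all)
  moreover have "closed {x::'v\<Rightarrow>real. \<forall>v. v \<notin> f \<longrightarrow> x v = 0}"
    using closed_Collect_eq[OF coord continuous_on_const]
    by (auto intro!: closed_Collect_all closed_Collect_imp)
  moreover have "closed {x::'v\<Rightarrow>real. sum x f = 1}"
    by (intro closed_Collect_eq continuous_intros) auto
  ultimately have "closed ({x::'v\<Rightarrow>real. \<forall>v. 0 \<le> x v} \<inter> {x. \<forall>v. v \<notin> f \<longrightarrow> x v = 0}
      \<inter> {x. sum x f = 1})"
    by blast
  then show ?thesis
    by (simp add: facet_simplex_def Int_def conj_assoc)
qed

lemma closed_realization: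
  assumes "finite F" "\<forall>f\<in>F. finite f"
  shows "closed (realization F)"
  using assms by (auto simp: realization_eq_UN_facet_simplex intro!: closed_UN closed_facet_simplex)

lemma facet_simplex_nonvertex_nonempty:
  assumes "2 \<le> card f"
  shows "\<exists>x\<in>facet_simplex f. x \<notin> range vertex_point"
proof
  define x where "x = (\<lambda>v. if v \<in> f then 1 / real (card f) else 0)"
  show "x \<in> facet_simplex f"
    using assms by (simp add: facet_simplex_def x_def)
  show "x \<notin> range vertex_point"
  proof
    assume "x \<in> range vertex_point"
    then obtain v where "x v = 1"
      by (auto simp: vertex_point_def)
    then show False
      using assms by (auto simp: x_def split: if_splits)
  qed
qed

lemma card_Int_ge_2_if_common_nonvertex:
  assumes "x \<in> facet_simplex a" "x \<in> facet_simplex b" "finite a" "x \<notin> vertex_point ` a"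
  shows "2 \<le> card (a \<inter> b)"
proof -
  have support: "{v. x v \<noteq> 0} \<subseteq> a \<inter> b"
    using assms(1,2) by (auto simp: facet_simplex_def)
  have sum_1: "sum x a = 1"
    using assms(1) by (simp add: facet_simplex_def)
  obtain v1 where v1: "v1 \<in> a" "x v1 \<noteq> 0"
    using sum_1 by (metis sum.neutral zero_neq_one)
  obtain v2 where v2: "v2 \<noteq> v1" "x v2 \<noteq> 0"
  proof (rule ccontr)
    assume "\<not> thesis"
    with that have zero: "\<And>v. v \<noteq> v1 \<Longrightarrow> x v = 0"
      by blast
    then have "x v1 = 1"
      using sum_1 assms(3) v1(1) by (simp add: sum.remove)
    with zero have "x = vertex_point v1"
      by (auto simp: vertex_point_def)
    then show False
      using assms(4) v1(1) by blast
  qed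
  have "card {v1, v2} \<le> card (a \<inter> b)"
    using support v1 v2 assms(3) by (intro card_mono) auto
  with v2(1) show ?thesis
    by simp
qed

lemma shared_edge_across_cut:
  fixes F :: "'v set set"
  assumes fin: "finite F" and card_ge_2: "\<forall>f\<in>F. 2 \<le> card f"
    and con: "connected (realization F - vertex_point ` \<Union>F)"
    and A: "A \<subseteq> F" "A \<noteq> {}" "A \<noteq> F"
  shows "\<exists>a\<in>A. \<exists>b\<in>F - A. 2 \<le> card (a \<inter> b)"
proof (rule ccontr)
  assume no_edge: "\<not> ?thesis"
  have fin_facets: "\<forall>f\<in>F. finite f"
    using card_ge_2 card.infinite by fastforce
  define P where "P = realization F - vertex_point ` \<Union>F"
  define E1 where "E1 = P \<inter> realization A"
  define E2 where "E2 = P \<inter> realization (F - A)"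
  have "closedin (top_of_set P) E1" "closedin (top_of_set P) E2"
    unfolding E1_def E2_def using A fin fin_facets
    by (auto intro!: closedin_closed_Int closed_realization intro: finite_subset)
  moreover have "P \<subseteq> E1 \<union> E2"
    using A(1) unfolding P_def E1_def E2_def realization_eq_UN_facet_simplex by blast
  moreover have "E1 \<inter> E2 = {}"
  proof (rule ccontr)
    assume "E1 \<inter> E2 \<noteq> {}"
    then obtain x a b where "x \<in> P" "a \<in> A" "b \<in> F - A"
      "x \<in> facet_simplex a" "x \<in> facet_simplex b"
      by (auto simp: E1_def E2_def realization_eq_UN_facet_simplex)
    then have "2 \<le> card (a \<inter> b)"
      using A(1) fin_facets by (intro card_Int_ge_2_if_common_nonvertex) (auto simp: P_def)
    with no_edge \<open>a \<in> A\<close> \<open>b \<in> F - A\<close> show False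
      by blast
  qed
  moreover have "P \<inter> realization G \<noteq> {}" if G: "G \<subseteq> F" "G \<noteq> {}" for G
  proof -
    obtain g where "g \<in> G"
      using G(2) by blast
    then obtain x where "x \<in> facet_simplex g" "x \<notin> range vertex_point"
      using facet_simplex_nonvertex_nonempty card_ge_2 G(1) by blast
    with \<open>g \<in> G\<close> G(1) show ?thesis
      unfolding P_def realization_eq_UN_facet_simplex by blast
  qed
  then have "E1 \<noteq> {}" "E2 \<noteq> {}"
    using A by (auto simp: E1_def E2_def)
  ultimately show False
    using con unfolding connected_closedin P_def by blast
qed

lemma vdeg_eq_0_if_not_vertex:
  assumes "S \<subseteq> incidence_arcs G" "v \<notin> \<Union>G"
  shows "vdeg S v = 0"
proof -
  have "{g. (v, g) \<in> S} = {}"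
    using assms by (auto simp: incidence_arcs_def)
  then show ?thesis
    by (simp add: vdeg_def)
qed

lemma incidence_arcs_insert_facet:
  assumes S: "S \<subseteq> incidence_arcs G" and deg: "\<forall>g\<in>G. fdeg S g = 2"
    and "finite G" "f \<notin> G" "x \<in> f" "y \<in> f" "x \<noteq> y"
  defines "S' \<equiv> insert (x, f) (insert (y, f) S)"
  shows "S' \<subseteq> incidence_arcs (insert f G)"
    and "\<forall>g\<in>insert f G. fdeg S' g = 2"
    and "vdeg S' v = vdeg S v + (if v = x \<or> v = y then 1 else 0)"
proof -
  show "S' \<subseteq> incidence_arcs (insert f G)"
    using assms by (auto simp: S'_def incidence_arcs_def)
  have "fdeg S' g = 2" if "g \<in> insert f G" for g
  proof (cases "g = f")
    case True
    then have "{w. (w, g) \<in> S'} = {x, y}"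
      using assms by (auto simp: S'_def incidence_arcs_def)
    then show ?thesis
      using \<open>x \<noteq> y\<close> by (simp add: fdeg_def)
  next
    case False
    then have "{w. (w, g) \<in> S'} = {w. (w, g) \<in> S}"
      by (auto simp: S'_def)
    then show ?thesis
      using deg that False by (simp add: fdeg_def)
  qed
  then show "\<forall>g\<in>insert f G. fdeg S' g = 2"
    by blast
  have "finite {g. (v, g) \<in> S}"
    using S \<open>finite G\<close> by (auto simp: incidence_arcs_def intro: finite_subset)
  moreover have "f \<notin> {g. (v, g) \<in> S}"
    using S \<open>f \<notin> G\<close> by (auto simp: incidence_arcs_def)
  moreover have "{g. (v, g) \<in> S'} = {g. (v, g) \<in> S} \<union> (if v = x \<or> v = y then {f} else {})"
    by (auto simp: S'_def)
  ultimately show "vdeg S' v = vdeg S v + (if v = x \<or> v = y then 1 else 0)"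
    by (simp add: vdeg_def)
qed

definition parities_realizable :: "'v set set \<Rightarrow> 'v \<Rightarrow> 'v \<Rightarrow> ('v \<Rightarrow> bool) \<Rightarrow> bool" where
  "parities_realizable G u w p \<longleftrightarrow> (\<exists>S. S \<subseteq> incidence_arcs G \<and> (\<forall>g\<in>G. fdeg S g = 2) \<and>
     (\<forall>v\<in>\<Union>G - {u, w}. odd (vdeg S v) \<longleftrightarrow> p v))"

definition parity_flexible :: "'v set set \<Rightarrow> bool" where
  "parity_flexible G \<longleftrightarrow> (\<forall>u\<in>\<Union>G. \<forall>w\<in>\<Union>G. u \<noteq> w \<longrightarrow> (\<forall>p. parities_realizable G u w p))"

lemma parities_realizable_commute:
  "parities_realizable G u w p \<longleftrightarrow> parities_realizable G w u p"
  by (simp add: parities_realizable_def insert_commute)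

lemma parities_realizable_insert_facet:
  assumes "S \<subseteq> incidence_arcs G" "\<forall>g\<in>G. fdeg S g = 2"
    and "finite G" "f \<notin> G" "x \<in> f" "y \<in> f" "x \<noteq> y"
    and par: "\<forall>v\<in>\<Union>(insert f G) - {u, w}. (odd (vdeg S v) \<noteq> (v = x \<or> v = y)) \<longleftrightarrow> p v"
  shows "parities_realizable (insert f G) u w p"
proof -
  note S' = incidence_arcs_insert_facet[OF assms(1-7)]
  have "odd (vdeg (insert (x, f) (insert (y, f) S)) v) \<longleftrightarrow> p v" if "v \<in> \<Union>(insert f G) - {u, w}" for v
    using bspec[OF par that] by (auto simp: S'(3))
  with S'(1,2) show ?thesis
    unfolding parities_realizable_def by blast
qed

lemma parities_realizable_insert_facet_flip:
  assumes "finite G" "f \<notin> G" "x \<in> f" "y \<in> f" "x \<noteq> y"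
    and "parities_realizable G u w (\<lambda>v. p v \<noteq> (v = x \<or> v = y))"
    and new: "\<forall>v\<in>f - \<Union>G - {u, w}. p v \<longleftrightarrow> v = x \<or> v = y"
  shows "parities_realizable (insert f G) u w p"
proof -
  obtain S where S: "S \<subseteq> incidence_arcs G" "\<forall>g\<in>G. fdeg S g = 2"
    and par: "\<forall>v\<in>\<Union>G - {u, w}. odd (vdeg S v) \<longleftrightarrow> p v \<noteq> (v = x \<or> v = y)"
    using assms(6) unfolding parities_realizable_def by (elim exE conjE) (rule that)
  have "(odd (vdeg S v) \<noteq> (v = x \<or> v = y)) \<longleftrightarrow> p v" if v: "v \<in> \<Union>(insert f G) - {u, w}" for v
  proof (cases "v \<in> \<Union>G")
    case True
    with v par show ?thesis
      by auto
  next
    case False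
    with v new show ?thesis
      using vdeg_eq_0_if_not_vertex[OF S(1) False] by auto
  qed
  with S assms(1-5) show ?thesis
    by (intro parities_realizable_insert_facet) auto
qed

lemma parity_flexible_singleton:
  assumes "card f = 3"
  shows "parity_flexible {f}"
  unfolding parity_flexible_def
proof (intro ballI impI allI)
  fix u w p
  assume "u \<in> \<Union>{f}" "w \<in> \<Union>{f}" "u \<noteq> w"
  then have uw: "u \<in> f" "w \<in> f" "u \<noteq> w"
    by auto
  have "finite f"
    using assms by (simp add: card_ge_0_finite)
  have "\<not> f \<subseteq> {u, w}"
    using card_mono[of "{u, w}" f] assms by (auto simp: card_insert_if split: if_splits)
  then obtain r where r: "r \<in> f" "r \<noteq> u" "r \<noteq> w"
    by blast
  have "card {u, w, r} = 3"
    using uw r by simp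
  then have f: "f = {u, w, r}"
    using uw r \<open>finite f\<close> assms by (intro card_seteq[symmetric]) auto
  have empty: "parities_realizable {} u w q" for q
    unfolding parities_realizable_def by (intro exI[of _ "{}"]) simp
  have "parities_realizable (insert f {}) u w p"
  proof (cases "p r")
    case True
    show ?thesis
      by (rule parities_realizable_insert_facet_flip[of "{}" f u r]) (use uw r f True empty in auto)
  next
    case False
    show ?thesis
      by (rule parities_realizable_insert_facet_flip[of "{}" f u w]) (use uw r f False empty in auto)
  qed
  then show "parities_realizable {f} u w p"
    by simp
qed

lemma three_set_meets_in_two_cases:
  assumes "card f = 3" "2 \<le> card (f \<inter> V)"
  obtains "f \<subseteq> V"
    | a b c where "f = {a, b, c}" "a \<in> V" "c \<in> V" "b \<notin> V" "a \<noteq> c"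
proof (cases "f \<subseteq> V")
  case True
  then show thesis
    by (rule that(1))
next
  case False
  then obtain b where b: "b \<in> f" "b \<notin> V"
    by blast
  have "finite f"
    using assms(1) card.infinite by fastforce
  then have sub: "f \<inter> V \<subseteq> f - {b}" and "card (f - {b}) = 2"
    using assms(1) b by auto
  then have "f \<inter> V = f - {b}"
    using card_seteq[OF _ sub] assms(2) \<open>finite f\<close> by simp
  with \<open>card (f - {b}) = 2\<close> obtain a c where "f - {b} = {a, c}" "a \<noteq> c"
    by (auto simp: card_2_iff)
  with b \<open>f \<inter> V = f - {b}\<close> show thesis
    by (intro that(2)[of a b c]) auto
qed

lemma parities_realizable_insert_facet_new_vertex_free:
  assumes fin: "finite G" and "f \<notin> G" and flex: "parity_flexible G"
    and f: "f = {a, b, c}" and old: "a \<in> \<Union>G" "c \<in> \<Union>G" and new: "b \<notin> \<Union>G"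
    and "a \<noteq> c" and u: "u \<in> \<Union>G" "u \<noteq> a"
  shows "parities_realizable (insert f G) u b p"
proof -
  \<comment> \<open>a is left free for G; the pair joined to f then repairs the parity at a\<close>
  have "parities_realizable G u a (\<lambda>v. p v \<noteq> (v = c))"
    using flex old(1) u unfolding parity_flexible_def by blast
  then obtain S where S: "S \<subseteq> incidence_arcs G" "\<forall>g\<in>G. fdeg S g = 2"
    and par: "\<forall>v\<in>\<Union>G - {u, a}. odd (vdeg S v) \<longleftrightarrow> p v \<noteq> (v = c)"
    unfolding parities_realizable_def by (elim exE conjE) (rule that)
  have vertices: "\<Union>(insert f G) - {u, b} = \<Union>G - {u}"
    using f old new by auto
  have "b \<noteq> a" "b \<noteq> c"
    using old new by auto
  note insert_facet = parities_realizable_insert_facet[OF S fin \<open>f \<notin> G\<close>, of _ _ u b p]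
  show ?thesis
  proof (cases "odd (vdeg S a) \<longleftrightarrow> p a")
    case True
    have "(odd (vdeg S v) \<noteq> (v = b \<or> v = c)) \<longleftrightarrow> p v" if "v \<in> \<Union>G - {u}" for v
      using that par True \<open>b \<noteq> a\<close> \<open>a \<noteq> c\<close> new by (cases "v = a") auto
    then show ?thesis
      using insert_facet[of b c] f \<open>b \<noteq> c\<close> vertices by auto
  next
    case False
    have "(odd (vdeg S v) \<noteq> (v = a \<or> v = c)) \<longleftrightarrow> p v" if "v \<in> \<Union>G - {u}" for v
      using that par False by (cases "v = a") auto
    then show ?thesis
      using insert_facet[of a c] f \<open>a \<noteq> c\<close> vertices by auto
  qed
qed

lemma parity_flexible_insert_facet:
  assumes fin: "finite G" and "f \<notin> G" "card f = 3"
    and meet: "2 \<le> card (f \<inter> \<Union>G)" and flex: "parity_flexible G"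
  shows "parity_flexible (insert f G)"
  unfolding parity_flexible_def
proof (intro ballI impI allI)
  fix u w p
  assume uw: "u \<in> \<Union>(insert f G)" "w \<in> \<Union>(insert f G)" "u \<noteq> w"
  note flip = parities_realizable_insert_facet_flip[OF fin \<open>f \<notin> G\<close>]
  have realizable_G: "parities_realizable G u' w' q" if "u' \<in> \<Union>G" "w' \<in> \<Union>G" "u' \<noteq> w'" for u' w' q
    using flex that unfolding parity_flexible_def by blast
  from \<open>card f = 3\<close> meet show "parities_realizable (insert f G) u w p"
  proof (cases rule: three_set_meets_in_two_cases)
    case 1
    obtain x y where xy: "x \<in> f" "y \<in> f" "x \<noteq> y"
      using \<open>card f = 3\<close> by (auto simp: card_3_iff)
    from 1 uw have "u \<in> \<Union>G" "w \<in> \<Union>G"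
      by auto
    then show ?thesis
      by (rule flip[OF xy realizable_G[OF _ _ uw(3)]]) (use 1 in auto)
  next
    case (2 a b c)
    have vertices: "\<Union>(insert f G) = insert b (\<Union>G)"
      using 2 by auto
    have new_free: "parities_realizable (insert f G) u' b p" if "u' \<in> \<Union>G" for u'
    proof (cases "u' = a")
      case True
      show ?thesis
        by (rule parities_realizable_insert_facet_new_vertex_free[OF fin \<open>f \<notin> G\<close> flex,
              where a = c and c = a]) (use 2 that True in auto)
    next
      case False
      show ?thesis
        by (rule parities_realizable_insert_facet_new_vertex_free[OF fin \<open>f \<notin> G\<close> flex,
              where a = a and c = c]) (use 2 that False in auto)
    qed
    consider (w_new) "b = w" | (u_new) "b = u" | (both_old) "b \<noteq> u" "b \<noteq> w"
      by blast
    then show ?thesis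
    proof cases
      case w_new
      have "u \<in> \<Union>G"
        using uw(1,3) vertices w_new by auto
      with w_new show ?thesis
        using new_free by simp
    next
      case u_new
      have "w \<in> \<Union>G"
        using uw(2,3) vertices u_new by auto
      with u_new have "parities_realizable (insert f G) w u p"
        using new_free by simp
      then show ?thesis
        by (rule parities_realizable_commute[THEN iffD1])
    next
      case both_old
      with uw vertices have old: "u \<in> \<Union>G" "w \<in> \<Union>G"
        by auto
      have new: "f - \<Union>G - {u, w} = {b}"
        using 2 both_old by auto
      show ?thesis
      proof (cases "p b")
        case True
        show ?thesis
          by (rule flip[of b c, OF _ _ _ realizable_G[OF old uw(3)]]) (use 2 new True in auto)
      next
        case False
        show ?thesis
          by (rule flip[of a c, OF _ _ _ realizable_G[OF old uw(3)]]) (use 2 new False in auto)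
      qed
    qed
  qed
qed

lemma parity_flexible_if_shared_edges:
  fixes F :: "'v set set"
  assumes fin: "finite F" and card_3: "\<forall>f\<in>F. card f = 3" and "F \<noteq> {}"
    and shared: "\<And>A. A \<subseteq> F \<Longrightarrow> A \<noteq> {} \<Longrightarrow> A \<noteq> F \<Longrightarrow> \<exists>a\<in>A. \<exists>b\<in>F - A. 2 \<le> card (a \<inter> b)"
  shows "parity_flexible F"
proof -
  define \<G> where "\<G> = {G. G \<subseteq> F \<and> G \<noteq> {} \<and> parity_flexible G}"
  have "finite \<G>"
    using fin by (auto simp: \<G>_def)
  moreover obtain f where "f \<in> F"
    using \<open>F \<noteq> {}\<close> by blast
  then have "{f} \<in> \<G>"
    using card_3 parity_flexible_singleton by (auto simp: \<G>_def)
  ultimately obtain G where G: "G \<in> \<G>" and maximal: "\<And>H. H \<in> \<G> \<Longrightarrow> G \<subseteq> H \<Longrightarrow> G = H"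
    using finite_has_maximal[of \<G>] by blast
  have "G = F"
  proof (rule ccontr)
    assume "G \<noteq> F"
    moreover have "G \<subseteq> F" "G \<noteq> {}"
      using G by (auto simp: \<G>_def)
    ultimately obtain a b where ab: "a \<in> G" "b \<in> F - G" "2 \<le> card (a \<inter> b)"
      using shared by blast
    have "finite b"
      using ab(2) card_3 card.infinite by fastforce
    then have "card (a \<inter> b) \<le> card (b \<inter> \<Union>G)"
      using ab(1) by (intro card_mono) auto
    then have "parity_flexible (insert b G)"
      using G ab fin card_3 by (intro parity_flexible_insert_facet) (auto simp: \<G>_def intro: finite_subset)
    then have "insert b G \<in> \<G>"
      using G ab by (auto simp: \<G>_def)
    with maximal ab(2) show False
      by blast
  qed
  with G show ?thesis
    by (simp add: \<G>_def)
qed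

lemma scaffold_if_parity_flexible:
  assumes "parity_flexible F" "f \<in> F" "card f = 3"
  shows "\<exists>S. scaffold F S"
proof -
  obtain u w where "u \<in> f" "w \<in> f" "u \<noteq> w"
    using assms(3) by (auto simp: card_3_iff)
  with assms(1,2) have "parities_realizable F u w (\<lambda>_. False)"
    unfolding parity_flexible_def by blast
  then obtain S where S: "S \<subseteq> incidence_arcs F" "\<forall>g\<in>F. fdeg S g = 2"
    and even: "\<forall>v\<in>\<Union>F - {u, w}. odd (vdeg S v) \<longleftrightarrow> False"
    unfolding parities_realizable_def by (elim exE conjE) (rule that)
  have "card {v \<in> complex_vertices F. odd (vdeg S v)} \<le> card {u, w}"
    using even by (intro card_mono) (auto simp: complex_vertices_def)
  also have "\<dots> \<le> 2"
    by (simp add: card_insert_le_m1)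
  finally show ?thesis
    using S unfolding scaffold_def by blast
qed

theorem lemma3:
  fixes F :: "'v set set"
  assumes "triangulated_polygon_no_interior F"
  shows "\<exists>S. scaffold F S"
proof -
  from assms obtain h k where fin: "finite F" and card_3: "\<forall>f\<in>F. card f = 3"
    and hom: "homeomorphism (realization F) (cball (0::complex) 1) h k"
    unfolding triangulated_polygon_no_interior_def by blast
  have "F \<noteq> {}"
  proof
    assume "F = {}"
    then have "h ` {} = cball (0::complex) 1"
      using homeomorphism_image1[OF hom] by (simp add: realization_def)
    then show False
      using cball_eq_empty[of "0::complex" 1] by simp
  qed
  have "finite (\<Union>F)"
    using fin card_3 by (intro finite_Union) (auto intro: card_ge_0_finite)
  then have "connected (realization F - vertex_point ` \<Union>F)"
    by (intro connected_homeomorphic_convex_diff_countable[OF hom])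
      (auto simp: collinear_aff_dim aff_dim_cball countable_finite)
  then have "parity_flexible F"
    using fin card_3 \<open>F \<noteq> {}\<close> shared_edge_across_cut[of F]
    by (intro parity_flexible_if_shared_edges) auto
  with \<open>F \<noteq> {}\<close> card_3 show ?thesis
    using scaffold_if_parity_flexible by blast
qed

end
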